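(* Let $v_1,\dots,v_m$ be vectors in the closed unit ball $B^n$ of $\mathbb{R}^n$, and assume there are positive weights $\beta_1,\dots,\beta_m$ with \[ \sum_i\beta_i=1,\qquad\sum_i\beta_iv_i=0,\qquad\sum_i\beta_i|v_i|^2=\theta\ \text{ for some }\theta\in(0,1]. \] Then the inradius of $(\operatorname{conv}\{v_1,\dots,v_m\})^\circ$ is at most $1/\theta$.
   Context: The polar of $S\subseteq\mathbb{R}^n$ is $S^\circ=\{p:\langle x,p\rangle\le1\ \forall x\in S\}$. The inradius of a convex set is the supremum of radii of Euclidean balls contained in it (within its affine hull). *)

theory Defs
  imports "HOL-Analysis.Analysis"
begin

definition polar :: "'a::real_inner set \<Rightarrow> 'a set" where
  "polar S = {p. \<forall>x\<in>S. inner x p \<le> 1}"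

definition inradius :: "'a::euclidean_space set \<Rightarrow> ereal" where
  "inradius S = Sup (ereal ` {r. r \<ge> 0 \<and> (\<exists>c \<in> affine hull S. cball c r \<inter> affine hull S \<subseteq> S)})"

end

theory Submission
  imports Defs
begin

text \<open>If \<open>cball c r\<close> lies in the polar of the \<open>v\<^sub>i\<close>, testing the point of the ball farthest in
  direction \<open>v\<^sub>i\<close> gives \<open>\<langle>v\<^sub>i, c\<rangle> + r |v\<^sub>i| \<le> 1\<close>. Averaging with the weights \<open>\<beta>\<^sub>i\<close> kills the
  centre, since \<open>\<Sum> \<beta>\<^sub>i v\<^sub>i = 0\<close>, leaving \<open>r \<Sum> \<beta>\<^sub>i |v\<^sub>i| \<le> 1\<close>; and \<open>|v\<^sub>i| \<le> 1\<close> gives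
  \<open>\<Sum> \<beta>\<^sub>i |v\<^sub>i| \<ge> \<Sum> \<beta>\<^sub>i |v\<^sub>i|\<^sup>2 = \<theta>\<close>. The polar contains the unit ball, so its affine hull is the
  whole space and the inradius is the supremum of these radii \<open>r \<le> 1/\<theta>\<close>.\<close>

lemma polar_antimono: "S \<subseteq> T \<Longrightarrow> polar T \<subseteq> polar S"
  unfolding polar_def by auto

lemma cball_subset_polar:
  assumes "S \<subseteq> cball 0 1"
  shows "cball 0 1 \<subseteq> polar S"
proof
  fix p :: 'a assume "p \<in> cball 0 1"
  then have p: "norm p \<le> 1" by simp
  show "p \<in> polar S" unfolding polar_def
  proof (intro CollectI ballI)
    fix x assume "x \<in> S"
    with assms have "norm x \<le> 1" by auto
    then have "norm x * norm p \<le> 1" using p by (simp add: mult_le_one)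
    then show "inner x p \<le> 1" using norm_cauchy_schwarz[of x p] by linarith
  qed
qed

lemma affine_hull_polar_eq_UNIV:
  fixes S :: "'a::euclidean_space set"
  assumes "S \<subseteq> cball 0 1"
  shows "affine hull (polar S) = UNIV"
proof -
  have "ball (0::'a) 1 \<subseteq> polar S"
    using cball_subset_polar[OF assms] by auto
  then have "affine hull (ball (0::'a) 1) \<subseteq> affine hull (polar S)"
    by (rule hull_mono)
  then show ?thesis by (auto simp: affine_hull_open)
qed

lemma inradius_le_full_dim:
  fixes S :: "'a::euclidean_space set"
  assumes "affine hull S = UNIV"
    and "\<And>c r. 0 \<le> r \<Longrightarrow> cball c r \<subseteq> S \<Longrightarrow> r \<le> B"
  shows "inradius S \<le> ereal B"
  unfolding inradius_def assms(1) by (rule Sup_least) (use assms(2) in auto)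

lemma cball_subset_polar_support:
  assumes "cball c r \<subseteq> polar S" "0 \<le> r" "x \<in> S"
  shows "inner x c + r * norm x \<le> 1"
proof (cases "x = 0")
  case True
  then show ?thesis by simp
next
  case False
  define p where "p = c + (r / norm x) *\<^sub>R x"
  have "dist c p = r" using False \<open>0 \<le> r\<close> by (simp add: p_def dist_norm)
  then have "p \<in> polar S" using assms(1) by auto
  then have "inner x p \<le> 1" using \<open>x \<in> S\<close> unfolding polar_def by auto
  moreover have "inner x p = inner x c + r * norm x"
    using False by (simp add: p_def inner_add_right power2_norm_eq_inner[symmetric] power2_eq_square)
  ultimately show ?thesis by simp
qed

lemma cball_subset_polar_radius_mean_norm:
  fixes v :: "'i \<Rightarrow> 'a::real_inner"
  assumes "\<And>i. i \<in> I \<Longrightarrow> 0 \<le> \<beta> i"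
    and "(\<Sum>i\<in>I. \<beta> i) = 1" and "(\<Sum>i\<in>I. \<beta> i *\<^sub>R v i) = 0"
    and "cball c r \<subseteq> polar (v ` I)" and "0 \<le> r"
  shows "r * (\<Sum>i\<in>I. \<beta> i * norm (v i)) \<le> 1"
proof -
  have "(\<Sum>i\<in>I. \<beta> i * (inner (v i) c + r * norm (v i))) \<le> (\<Sum>i\<in>I. \<beta> i * 1)"
    using cball_subset_polar_support[OF assms(4,5)] assms(1)
    by (intro sum_mono mult_left_mono) auto
  moreover have "(\<Sum>i\<in>I. \<beta> i * inner (v i) c) = inner (\<Sum>i\<in>I. \<beta> i *\<^sub>R v i) c"
    by (simp add: inner_sum_left)
  ultimately show ?thesis
    using assms(2,3) by (simp add: distrib_left sum.distrib sum_distrib_left mult_ac)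
qed

lemma weighted_sum_norm_sq_le_norm:
  fixes v :: "'i \<Rightarrow> 'a::real_normed_vector"
  assumes "\<And>i. i \<in> I \<Longrightarrow> 0 \<le> \<beta> i" and "\<And>i. i \<in> I \<Longrightarrow> norm (v i) \<le> 1"
  shows "(\<Sum>i\<in>I. \<beta> i * (norm (v i))\<^sup>2) \<le> (\<Sum>i\<in>I. \<beta> i * norm (v i))"
proof (intro sum_mono mult_left_mono)
  fix i assume "i \<in> I"
  then show "(norm (v i))\<^sup>2 \<le> norm (v i)" "0 \<le> \<beta> i"
    using assms by (auto simp: power2_eq_square mult_left_le)
qed

theorem mainTheorem12:
  fixes v :: "nat \<Rightarrow> 'a::euclidean_space" and \<beta> :: "nat \<Rightarrow> real"
    and m :: nat and \<theta> :: real
  assumes v_ball: "\<And>i. i < m \<Longrightarrow> norm (v i) \<le> 1"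
    and \<beta>_pos: "\<And>i. i < m \<Longrightarrow> \<beta> i > 0"
    and sum1: "(\<Sum>i<m. \<beta> i) = 1"
    and sum0: "(\<Sum>i<m. \<beta> i *\<^sub>R v i) = 0"
    and sumsq: "(\<Sum>i<m. \<beta> i * (norm (v i))\<^sup>2) = \<theta>"
    and \<theta>_pos: "0 < \<theta>" and \<theta>_le: "\<theta> \<le> 1"
  shows "inradius (polar (convex hull (v ` {..<m}))) \<le> ereal (1 / \<theta>)"
proof (rule inradius_le_full_dim)
  have \<beta>_nonneg: "\<And>i. i \<in> {..<m} \<Longrightarrow> 0 \<le> \<beta> i"
    using \<beta>_pos by (simp add: less_imp_le)
  have "convex hull (v ` {..<m}) \<subseteq> cball 0 1"
    by (rule hull_minimal) (auto simp: v_ball)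
  then show "affine hull (polar (convex hull (v ` {..<m}))) = UNIV"
    by (rule affine_hull_polar_eq_UNIV)
  fix c r assume r: "0 \<le> r" and "cball c r \<subseteq> polar (convex hull (v ` {..<m}))"
  then have "cball c r \<subseteq> polar (v ` {..<m})"
    using polar_antimono[OF hull_subset] by blast
  then have "r * (\<Sum>i<m. \<beta> i * norm (v i)) \<le> 1"
    using cball_subset_polar_radius_mean_norm[OF \<beta>_nonneg sum1 sum0] r by blast
  moreover have "\<theta> \<le> (\<Sum>i<m. \<beta> i * norm (v i))"
    using weighted_sum_norm_sq_le_norm[of "{..<m}" \<beta> v] \<beta>_nonneg v_ball sumsq by simp
  ultimately have "r * \<theta> \<le> 1"
    using r by (meson mult_left_mono order_trans)
  then show "r \<le> 1 / \<theta>"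
    using \<theta>_pos by (simp add: field_simps)
qed

end
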